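(* Let $b>0$, $\sigma>0$. Let $A\subseteq\mathbb{R}$ be a closed set with smallest element $\theta_*$, and let $c:A\to\mathbb{R}$ be nondecreasing and left-continuous with $c(\theta_* )=0$, $c(x)>0$ for $x\in A$, $x>\theta_*$, and, if $A$ is unbounded, $\inf\{c(x)/x: x\in A,x\ge y\}\uparrow\infty$ as $y\uparrow\infty$. Let $\phi(y)=\sup_{x\in A}\{yx-c(x)\}$ for $y\ge0$; for $p>0$ let $\phi_*(p)=-\inf\{\phi(y):y\in[0,p]\}$ and $F(\gamma,p)=\int_0^p\frac{du}{\phi(u)+\gamma}$ for $\gamma\in(\phi_*(p),\infty)$. Then for each $p>0$ there exists a unique $\gamma(p)\in(\phi_*(p),\infty)$ such that $\tfrac12\sigma^2F(\gamma(p),p)=b$.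
   Context: Under the assumptions, $\phi$ is finite, convex and continuous on $[0,\infty)$, so $\phi_*(p)$ is finite. *)

theory Defs
  imports "HOL-Analysis.Analysis"
begin

definition phi :: "real set \<Rightarrow> (real \<Rightarrow> real) \<Rightarrow> real \<Rightarrow> real" where
  "phi A c y = Sup ((\<lambda>x. y * x - c x) ` A)"

definition phi_star :: "real set \<Rightarrow> (real \<Rightarrow> real) \<Rightarrow> real \<Rightarrow> real" where
  "phi_star A c p = - Inf (phi A c ` {0..p})"

definition F :: "real set \<Rightarrow> (real \<Rightarrow> real) \<Rightarrow> real \<Rightarrow> real \<Rightarrow> real" where
  "F A c \<gamma> p = integral {0..p} (\<lambda>u. 1 / (phi A c u + \<gamma>))"

end

theory Submission
  imports Defs "HOL-Real_Asymp.Real_Asymp"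
begin

text \<open>
  For \<open>y \<in> [0, p]\<close> the supremum defining \<open>\<phi>(y)\<close> may be taken over the \<open>x \<in> A\<close> below some
  bound \<open>M\<close>: beyond it the growth condition gives \<open>c x \<ge> p (x - \<theta>)\<close>, so such \<open>x\<close> do no better
  than \<open>\<theta>\<close>. Hence \<open>\<phi>\<close> is a supremum of affine functions with bounded slopes and is Lipschitz on
  \<open>[0, p]\<close>. For any Lipschitz \<open>g\<close> on \<open>[0, p]\<close> with minimum \<open>m = g u\<^sub>0\<close>, the map
  \<open>\<gamma> \<mapsto> \<integral>\<^sub>0\<^sup>p du / (g u + \<gamma>)\<close> is continuous and strictly decreasing on \<open>(-m, \<infinity>)\<close> and tends
  to \<open>0\<close> at \<open>\<infinity>\<close>; it tends to \<open>\<infinity>\<close> as \<open>\<gamma> \<down> -m\<close>, because \<open>g u + \<gamma> \<le> (\<gamma> + m) + K \<bar>u - u\<^sub>0\<bar>\<close>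
  bounds it below by a multiple of \<open>-ln (\<gamma> + m)\<close>.
\<close>

lemma ex1_eq_strict_antimono_on:
  fixes f :: "real \<Rightarrow> real"
  assumes cont: "continuous_on {a<..} f" and decr: "strict_antimono_on {a<..} f"
    and lim_a: "filterlim f at_top (at_right a)" and lim_top: "(f \<longlongrightarrow> 0) at_top" and "y > 0"
  shows "\<exists>!x. a < x \<and> f x = y"
proof -
  have "\<forall>\<^sub>F x in at_right a. a < x \<and> y \<le> f x"
    using eventually_at_right_less lim_a[unfolded filterlim_at_top, rule_format, of y] by (rule eventually_conj)
  then obtain x1 where x1: "a < x1" "y \<le> f x1"
    using eventually_happens'[of "at_right a"] by auto
  have "\<forall>\<^sub>F x in at_top. x1 \<le> x \<and> f x < y"
    using eventually_ge_at_top order_tendstoD(2)[OF lim_top \<open>y > 0\<close>] by (rule eventually_conj)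
  then obtain x2 where x2: "x1 \<le> x2" "f x2 < y"
    using eventually_happens'[of "at_top :: real filter"] by auto
  have "continuous_on {x1..x2} f"
    using cont by (rule continuous_on_subset) (use x1 in auto)
  then obtain x where x: "x1 \<le> x" "x \<le> x2" "f x = y"
    using IVT2'[of f x2 y x1] x1 x2 by auto
  moreover have "x' = x" if "a < x'" "f x' = y" for x'
    using monotone_onD[OF decr, of x x'] monotone_onD[OF decr, of x' x] that x x1
    by (cases x x' rule: linorder_cases) auto
  ultimately show ?thesis
    using x1 by (intro ex1I[of _ x]) auto
qed

lemma cSUP_eq_cSUP_of_dominated:
  fixes f :: "'a \<Rightarrow> 'b::conditionally_complete_lattice"
  assumes "T \<subseteq> S" "T \<noteq> {}" "bdd_above (f ` T)" and dominated: "\<forall>x\<in>S. \<exists>t\<in>T. f x \<le> f t"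
  shows "(SUP x\<in>S. f x) = (SUP x\<in>T. f x)"
proof (rule order.antisym)
  show "(SUP x\<in>S. f x) \<le> (SUP x\<in>T. f x)"
    using assms by (intro cSUP_mono) auto
  obtain B where B: "\<forall>t\<in>T. f t \<le> B"
    using \<open>bdd_above (f ` T)\<close> by (auto simp: bdd_above_def)
  have "bdd_above (f ` S)"
  proof (rule bdd_aboveI2)
    fix x assume "x \<in> S"
    then obtain t where "t \<in> T" "f x \<le> f t"
      using dominated by blast
    then show "f x \<le> B"
      using B order_trans by blast
  qed
  then show "(SUP x\<in>T. f x) \<le> (SUP x\<in>S. f x)"
    using assms by (intro cSUP_subset_mono) auto
qed

lemma lipschitz_on_SUP:
  fixes f :: "'i \<Rightarrow> 'a::metric_space \<Rightarrow> real"
  assumes "I \<noteq> {}" and lip: "\<forall>i\<in>I. L-lipschitz_on U (f i)"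
    and bdd: "\<forall>x\<in>U. bdd_above ((\<lambda>i. f i x) ` I)"
  shows "L-lipschitz_on U (\<lambda>x. SUP i\<in>I. f i x)"
proof (rule lipschitz_onI)
  have le: "(SUP i\<in>I. f i x) \<le> (SUP i\<in>I. f i y) + L * dist x y" if "x \<in> U" "y \<in> U" for x y
  proof (rule cSUP_least[OF \<open>I \<noteq> {}\<close>])
    fix i assume "i \<in> I"
    then have "f i x \<le> f i y + L * dist x y"
      using lipschitz_onD[of L U "f i" x y] lip that by (auto simp: dist_real_def)
    also have "f i y \<le> (SUP i\<in>I. f i y)"
      using \<open>i \<in> I\<close> bdd that by (intro cSUP_upper) auto
    finally show "f i x \<le> (SUP i\<in>I. f i y) + L * dist x y"
      by simp
  qed
  show "dist (SUP i\<in>I. f i x) (SUP i\<in>I. f i y) \<le> L * dist x y" if "x \<in> U" "y \<in> U" for x y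
    using le[OF that] le[OF that(2,1)] by (auto simp: dist_real_def dist_commute)
  show "0 \<le> L"
    using lip \<open>I \<noteq> {}\<close> lipschitz_on_nonneg by blast
qed

lemma has_integral_inverse_affine_abs_right:
  fixes e K h a :: real
  assumes "e > 0" "K > 0" "h \<ge> 0"
  shows "((\<lambda>u. 1 / (e + K * \<bar>u - a\<bar>)) has_integral (ln (e + K * h) - ln e) / K) {a..a + h}"
proof -
  have "((\<lambda>u. 1 / (e + K * \<bar>u - a\<bar>)) has_integral
          ln (e + K * ((a + h) - a)) / K - ln (e + K * (a - a)) / K) {a..a + h}"
  proof (rule fundamental_theorem_of_calculus)
    fix x assume x: "x \<in> {a..a + h}"
    then have "e + K * (x - a) > 0"
      using assms by (simp add: add_pos_nonneg)
    then have "((\<lambda>u. ln (e + K * (u - a)) / K) has_real_derivative 1 / (e + K * (x - a)))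
                 (at x within {a..a + h})"
      using assms by (auto intro!: derivative_eq_intros)
    then show "((\<lambda>u. ln (e + K * (u - a)) / K) has_vector_derivative 1 / (e + K * \<bar>x - a\<bar>))
                 (at x within {a..a + h})"
      using x by (simp add: has_real_derivative_iff_has_vector_derivative)
  qed (use assms in simp)
  then show ?thesis
    by (simp add: diff_divide_distrib)
qed

lemma has_integral_inverse_affine_abs_left:
  fixes e K h a :: real
  assumes "e > 0" "K > 0" "h \<ge> 0"
  shows "((\<lambda>u. 1 / (e + K * \<bar>u - a\<bar>)) has_integral (ln (e + K * h) - ln e) / K) {a - h..a}"
  using has_integral_inverse_affine_abs_right[OF assms, of "- a"]
    has_integral_reflect_real[where f="\<lambda>u. 1 / (e + K * \<bar>u - a\<bar>)" and a="a - h" and b=a]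
  by (simp add: abs_minus_commute add.commute)

lemma integral_inverse_affine_abs_diverges:
  fixes a b u0 K :: real
  assumes "a < b" "u0 \<in> {a..b}" "K > 0"
  shows "filterlim (\<lambda>e. integral {a..b} (\<lambda>u. 1 / (e + K * \<bar>u - u0\<bar>))) at_top (at_right 0)"
proof -
  define h where "h = (b - a) / 2"
  have h: "h > 0"
    using assms by (simp add: h_def)
  have lower: "(ln (K * h) - ln e) / K \<le> integral {a..b} (\<lambda>u. 1 / (e + K * \<bar>u - u0\<bar>))"
    if e: "e > 0" for e
  proof -
    let ?f = "\<lambda>u. 1 / (e + K * \<bar>u - u0\<bar>)"
    obtain J where J: "J \<subseteq> {a..b}" and int_J: "(?f has_integral (ln (e + K * h) - ln e) / K) J"
    proof (cases "u0 \<le> a + h")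
      case True
      show ?thesis
      proof (rule that)
        show "{u0..u0 + h} \<subseteq> {a..b}"
          using True assms by (auto simp: h_def field_simps)
      qed (rule has_integral_inverse_affine_abs_right[OF e \<open>K > 0\<close> less_imp_le[OF h]])
    next
      case False
      show ?thesis
      proof (rule that)
        show "{u0 - h..u0} \<subseteq> {a..b}"
          using False assms by (auto simp: h_def field_simps)
      qed (rule has_integral_inverse_affine_abs_left[OF e \<open>K > 0\<close> less_imp_le[OF h]])
    qed
    have "continuous_on {a..b} ?f"
      using e \<open>K > 0\<close> by (intro continuous_intros) (auto simp: add_pos_nonneg less_imp_neq[symmetric])
    have "(ln (K * h) - ln e) / K \<le> (ln (e + K * h) - ln e) / K"
      using e h \<open>K > 0\<close> by (intro divide_right_mono) (auto simp: add_pos_pos)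
    also have "\<dots> = integral J ?f"
      using int_J by (simp add: integral_unique)
    also have "\<dots> \<le> integral {a..b} ?f"
      using int_J e \<open>K > 0\<close> \<open>continuous_on {a..b} ?f\<close>
      by (intro integral_subset_le[OF J]) (auto intro: integrable_continuous_real add_pos_nonneg less_imp_le)
    finally show ?thesis .
  qed
  have "filterlim (\<lambda>e. (ln (K * h) - ln e) / K) at_top (at_right 0)"
  proof -
    have "filterlim (\<lambda>e. (ln (K * h) + - ln e) * (1 / K)) at_top (at_right 0)"
      using \<open>K > 0\<close>
      by (intro filterlim_at_top_mult_tendsto_pos[OF tendsto_const] filterlim_tendsto_add_at_top[OF tendsto_const]
          filterlim_compose[OF filterlim_uminus_at_top_at_bot ln_at_0]) auto
    then show ?thesis
      by simp
  qed
  then show ?thesis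
    by (rule filterlim_at_top_mono) (auto intro: eventually_mono[OF eventually_at_right_less] lower)
qed

lemma continuous_on_inverse_shift:
  fixes g :: "real \<Rightarrow> real"
  assumes "continuous_on S g" "\<forall>u\<in>S. 0 < g u + \<gamma>"
  shows "continuous_on S (\<lambda>u. 1 / (g u + \<gamma>))"
  using assms by (intro continuous_intros) (auto simp: less_imp_neq[symmetric])

lemma continuous_on_integral_inverse_shift:
  fixes g :: "real \<Rightarrow> real"
  assumes g: "continuous_on {a..b} g" and lower: "\<forall>u\<in>{a..b}. m \<le> g u"
  shows "continuous_on {-m<..} (\<lambda>\<gamma>. integral {a..b} (\<lambda>u. 1 / (g u + \<gamma>)))"
proof -
  have "continuous_on ({-m<..} \<times> {a..b}) (\<lambda>(\<gamma>, u). 1 / (g u + \<gamma>))"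
    using lower by (auto intro!: continuous_intros continuous_on_compose2[OF g] simp: split_beta)
  then show ?thesis
    using integral_continuous_on_param[where f="\<lambda>\<gamma> u. 1 / (g u + \<gamma>)" and a=a and b=b] by simp
qed

lemma strict_antimono_on_integral_inverse_shift:
  fixes g :: "real \<Rightarrow> real"
  assumes g: "continuous_on {a..b} g" and "a < b" and lower: "\<forall>u\<in>{a..b}. m \<le> g u"
  shows "strict_antimono_on {-m<..} (\<lambda>\<gamma>. integral {a..b} (\<lambda>u. 1 / (g u + \<gamma>)))"
proof (rule monotone_onI)
  fix \<gamma> \<gamma>' assume "\<gamma> \<in> {-m<..}" "\<gamma>' \<in> {-m<..}" "\<gamma> < \<gamma>'"
  then have pos: "0 < g u + \<gamma>" "0 < g u + \<gamma>'" if "u \<in> {a..b}" for u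
    using lower that by force+
  show "integral {a..b} (\<lambda>u. 1 / (g u + \<gamma>')) < integral {a..b} (\<lambda>u. 1 / (g u + \<gamma>))"
  proof (rule integral_less_real)
    show "continuous_on {a..b} (\<lambda>u. 1 / (g u + \<gamma>'))" "continuous_on {a..b} (\<lambda>u. 1 / (g u + \<gamma>))"
      using pos by (auto intro: continuous_on_inverse_shift[OF g])
    show "1 / (g u + \<gamma>') < 1 / (g u + \<gamma>)" if "u \<in> {a<..<b}" for u
      using pos[of u] that \<open>\<gamma> < \<gamma>'\<close> by (simp add: divide_strict_left_mono)
  qed (use \<open>a < b\<close> in simp)
qed

lemma integral_inverse_shift_tendsto_0:
  fixes g :: "real \<Rightarrow> real"
  assumes g: "continuous_on {a..b} g" and "a \<le> b" and lower: "\<forall>u\<in>{a..b}. m \<le> g u"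
  shows "((\<lambda>\<gamma>. integral {a..b} (\<lambda>u. 1 / (g u + \<gamma>))) \<longlongrightarrow> 0) at_top"
proof (rule tendsto_sandwich)
  have bounds: "0 \<le> integral {a..b} (\<lambda>u. 1 / (g u + \<gamma>)) \<and>
      integral {a..b} (\<lambda>u. 1 / (g u + \<gamma>)) \<le> (b - a) / (\<gamma> + m)" if "\<gamma> > -m" for \<gamma>
  proof -
    have pos: "\<forall>u\<in>{a..b}. 0 < g u + \<gamma>"
      using lower that by force
    then have int: "(\<lambda>u. 1 / (g u + \<gamma>)) integrable_on {a..b}"
      by (intro integrable_continuous_real continuous_on_inverse_shift[OF g])
    have "integral {a..b} (\<lambda>u. 1 / (g u + \<gamma>)) \<le> integral {a..b} (\<lambda>u. 1 / (\<gamma> + m))"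
      using pos lower that by (intro integral_le int) (auto intro!: divide_left_mono)
    then show ?thesis
      using pos \<open>a \<le> b\<close> by (auto intro!: integral_nonneg int simp: less_imp_le)
  qed
  have "\<forall>\<^sub>F \<gamma> in at_top. 0 \<le> integral {a..b} (\<lambda>u. 1 / (g u + \<gamma>)) \<and>
      integral {a..b} (\<lambda>u. 1 / (g u + \<gamma>)) \<le> (b - a) / (\<gamma> + m)"
    using eventually_gt_at_top by (rule eventually_mono) (rule bounds)
  then show "\<forall>\<^sub>F \<gamma> in at_top. 0 \<le> integral {a..b} (\<lambda>u. 1 / (g u + \<gamma>))"
    and "\<forall>\<^sub>F \<gamma> in at_top. integral {a..b} (\<lambda>u. 1 / (g u + \<gamma>)) \<le> (b - a) / (\<gamma> + m)"
    by (auto elim: eventually_mono)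
  show "((\<lambda>\<gamma>. (b - a) / (\<gamma> + m)) \<longlongrightarrow> 0) at_top"
    by real_asymp
qed (rule tendsto_const)

lemma integral_inverse_shift_diverges:
  fixes g :: "real \<Rightarrow> real"
  assumes g: "L-lipschitz_on {a..b} g" and "a < b"
    and u0: "u0 \<in> {a..b}" and min: "\<forall>u\<in>{a..b}. g u0 \<le> g u"
  shows "filterlim (\<lambda>\<gamma>. integral {a..b} (\<lambda>u. 1 / (g u + \<gamma>))) at_top (at_right (- g u0))"
proof -
  define K where "K = L + 1"
  have "K > 0"
    using lipschitz_on_nonneg[OF g] by (simp add: K_def)
  have lip: "g u \<le> g u0 + K * \<bar>u - u0\<bar>" if "u \<in> {a..b}" for u
  proof -
    have "g u - g u0 \<le> L * \<bar>u - u0\<bar>"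
      using lipschitz_onD[OF g that u0] by (simp add: dist_real_def)
    also have "\<dots> \<le> K * \<bar>u - u0\<bar>"
      by (simp add: K_def mult_right_mono)
    finally show ?thesis by simp
  qed
  have compare: "integral {a..b} (\<lambda>u. 1 / (e + K * \<bar>u - u0\<bar>))
      \<le> integral {a..b} (\<lambda>u. 1 / (g u + (e - g u0)))" if "e > 0" for e
  proof (rule integral_le)
    have pos: "\<forall>u\<in>{a..b}. 0 < g u + (e - g u0)"
      using min that by force
    then show "(\<lambda>u. 1 / (g u + (e - g u0))) integrable_on {a..b}"
      by (intro integrable_continuous_real continuous_on_inverse_shift lipschitz_on_continuous_on[OF g])
    show "(\<lambda>u. 1 / (e + K * \<bar>u - u0\<bar>)) integrable_on {a..b}"
      using that \<open>K > 0\<close> by (intro integrable_continuous_real continuous_intros) (auto simp: add_pos_nonneg less_imp_neq[symmetric])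
    show "1 / (e + K * \<bar>u - u0\<bar>) \<le> 1 / (g u + (e - g u0))" if "u \<in> {a..b}" for u
    proof -
      have "0 < g u + (e - g u0)" "0 < e + K * \<bar>u - u0\<bar>"
        using pos that \<open>e > 0\<close> \<open>K > 0\<close> by (auto intro: add_pos_nonneg)
      then show ?thesis
        using lip[OF that] by (intro divide_left_mono) auto
    qed
  qed
  have "filterlim (\<lambda>e. integral {a..b} (\<lambda>u. 1 / (g u + (e - g u0)))) at_top (at_right 0)"
    by (rule filterlim_at_top_mono[OF integral_inverse_affine_abs_diverges[OF \<open>a < b\<close> u0 \<open>K > 0\<close>]])
      (auto intro: eventually_mono[OF eventually_at_right_less] compare)
  then show ?thesis
    by (subst filterlim_at_right_to_0) simp
qed

lemma ex1_integral_inverse_shift_eq: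
  fixes g :: "real \<Rightarrow> real"
  assumes g: "L-lipschitz_on {a..b} g" and "a < b" and "y > 0"
  shows "\<exists>!\<gamma>. - Inf (g ` {a..b}) < \<gamma> \<and> integral {a..b} (\<lambda>u. 1 / (g u + \<gamma>)) = y"
proof -
  have cont: "continuous_on {a..b} g"
    using g by (rule lipschitz_on_continuous_on)
  obtain u0 where u0: "u0 \<in> {a..b}" and min: "\<forall>u\<in>{a..b}. g u0 \<le> g u"
    using continuous_attains_inf[OF compact_Icc _ cont] \<open>a < b\<close> by auto
  have "Inf (g ` {a..b}) = g u0"
    using u0 min by (intro cInf_eq_minimum) auto
  moreover have "\<exists>!\<gamma>. - g u0 < \<gamma> \<and> integral {a..b} (\<lambda>u. 1 / (g u + \<gamma>)) = y"
    using min \<open>a < b\<close>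
    by (intro ex1_eq_strict_antimono_on continuous_on_integral_inverse_shift[OF cont]
        strict_antimono_on_integral_inverse_shift[OF cont] integral_inverse_shift_tendsto_0[OF cont]
        integral_inverse_shift_diverges[OF g \<open>a < b\<close> u0] \<open>y > 0\<close>) auto
  ultimately show ?thesis
    by simp
qed

lemma superlinear_ge_affine:
  fixes A :: "real set" and c :: "real \<Rightarrow> real"
  assumes c_nonneg: "\<forall>x\<in>A. 0 \<le> c x"
    and growth: "filterlim (\<lambda>y. Inf ((\<lambda>x. c x / x) ` {x \<in> A. x \<ge> y})) at_top at_top"
  shows "\<exists>M. \<forall>x\<in>A. M < x \<longrightarrow> k * x + d \<le> c x"
proof -
  obtain Y where Y: "\<forall>y\<ge>Y. \<bar>k\<bar> + 1 \<le> Inf ((\<lambda>x. c x / x) ` {x \<in> A. x \<ge> y})"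
    using growth by (auto simp: filterlim_at_top eventually_at_top_linorder)
  define M where "M = max Y \<bar>d\<bar>"
  have "Y \<le> M" "0 \<le> M" "d \<le> M"
    by (auto simp: M_def)
  have bdd: "bdd_below ((\<lambda>x. c x / x) ` {x \<in> A. x \<ge> M})"
    using c_nonneg \<open>0 \<le> M\<close> by (intro bdd_belowI[of _ 0]) auto
  have "k * x + d \<le> c x" if x: "x \<in> A" "M < x" for x
  proof -
    have "\<bar>k\<bar> + 1 \<le> Inf ((\<lambda>x. c x / x) ` {x \<in> A. x \<ge> M})"
      using Y \<open>Y \<le> M\<close> by blast
    also have "\<dots> \<le> c x / x"
      using x by (intro cInf_lower bdd) auto
    finally have "(\<bar>k\<bar> + 1) * x \<le> c x"
      using x \<open>0 \<le> M\<close> by (simp add: pos_le_divide_eq)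
    moreover have "k * x \<le> \<bar>k\<bar> * x"
      using x \<open>0 \<le> M\<close> by (intro mult_right_mono) auto
    ultimately show ?thesis
      using x \<open>d \<le> M\<close> by (simp add: algebra_simps)
  qed
  then show ?thesis
    by blast
qed

lemma lipschitz_on_phi:
  fixes A :: "real set" and c :: "real \<Rightarrow> real"
  assumes theta: "\<theta> \<in> A" "\<forall>x\<in>A. \<theta> \<le> x" and c_nonneg: "\<forall>x\<in>A. 0 \<le> c x" and "c \<theta> = 0"
    and tail: "\<forall>x\<in>A. M < x \<longrightarrow> p * (x - \<theta>) \<le> c x"
  shows "(\<bar>\<theta>\<bar> + \<bar>M\<bar>)-lipschitz_on {0..p} (phi A c)"
proof -
  define K where "K = \<bar>\<theta>\<bar> + \<bar>M\<bar>"
  define T where "T = A \<inter> {..max \<theta> M}"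
  have T: "\<theta> \<in> T" "T \<subseteq> A"
    using theta by (auto simp: T_def)
  have bound: "\<bar>x\<bar> \<le> K" if "x \<in> T" for x
    using that theta by (auto simp: T_def K_def)
  have bdd: "bdd_above ((\<lambda>x. y * x - c x) ` T)" for y
  proof (rule bdd_aboveI2)
    fix x assume "x \<in> T"
    have "y * x \<le> \<bar>y\<bar> * \<bar>x\<bar>"
      by (simp flip: abs_mult)
    also have "\<dots> \<le> \<bar>y\<bar> * K"
      using bound[OF \<open>x \<in> T\<close>] by (intro mult_left_mono) auto
    finally show "y * x - c x \<le> \<bar>y\<bar> * K"
      using c_nonneg T \<open>x \<in> T\<close> by fastforce
  qed
  have "phi A c y = (SUP x\<in>T. y * x - c x)" if y: "y \<in> {0..p}" for y
    unfolding phi_def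
  proof (rule cSUP_eq_cSUP_of_dominated[OF \<open>T \<subseteq> A\<close> _ bdd])
    show "\<forall>x\<in>A. \<exists>t\<in>T. y * x - c x \<le> y * t - c t"
    proof
      fix x assume "x \<in> A"
      show "\<exists>t\<in>T. y * x - c x \<le> y * t - c t"
      proof (cases "x \<le> max \<theta> M")
        case True
        then show ?thesis
          using \<open>x \<in> A\<close> by (auto simp: T_def)
      next
        case False
        then have "p * (x - \<theta>) \<le> c x"
          using tail \<open>x \<in> A\<close> by auto
        moreover have "(y - p) * (x - \<theta>) \<le> 0"
          using y False by (intro mult_nonpos_nonneg) auto
        ultimately have "y * x - c x \<le> y * \<theta> - c \<theta>"
          using \<open>c \<theta> = 0\<close> by (simp add: algebra_simps)
        then show ?thesis
          using T by blast
      qed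
    qed
  qed (use T in auto)
  moreover have "K-lipschitz_on {0..p} (\<lambda>y. SUP x\<in>T. y * x - c x)"
  proof (rule lipschitz_on_SUP)
    show "\<forall>x\<in>T. K-lipschitz_on {0..p} (\<lambda>y. y * x - c x)"
    proof
      fix x assume "x \<in> T"
      show "K-lipschitz_on {0..p} (\<lambda>y. y * x - c x)"
      proof (rule lipschitz_onI)
        fix y y'
        have "dist (y * x - c x) (y' * x - c x) = \<bar>x\<bar> * dist y y'"
          by (simp add: dist_real_def abs_mult left_diff_distrib[symmetric])
        also have "\<dots> \<le> K * dist y y'"
          using bound[OF \<open>x \<in> T\<close>] by (intro mult_right_mono) auto
        finally show "dist (y * x - c x) (y' * x - c x) \<le> K * dist y y'" .
      qed (simp add: K_def)
    qed
  qed (use T bdd in auto)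
  ultimately show ?thesis
    unfolding K_def by (rule lipschitz_on_transform[rotated])
qed

theorem corollary1:
  fixes b \<sigma> \<theta> :: real and A :: "real set" and c :: "real \<Rightarrow> real"
  assumes b_pos: "b > 0" and sigma_pos: "\<sigma> > 0"
    and A_closed: "closed A"
    and theta_in: "\<theta> \<in> A" and theta_min: "\<forall>x\<in>A. \<theta> \<le> x"
    and c_mono: "mono_on A c"
    and c_leftcont: "\<forall>x\<in>A. continuous (at x within (A \<inter> {..<x})) c"
    and c_theta: "c \<theta> = 0"
    and c_pos: "\<forall>x\<in>A. x > \<theta> \<longrightarrow> c x > 0"
    and growth: "\<not> bounded A \<Longrightarrow>
       filterlim (\<lambda>y. Inf ((\<lambda>x. c x / x) ` {x \<in> A. x \<ge> y})) at_top at_top"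
  shows "\<forall>p>0. \<exists>!\<gamma>. \<gamma> > phi_star A c p \<and> \<sigma>\<^sup>2 / 2 * F A c \<gamma> p = b"
proof (intro allI impI)
  fix p :: real assume "p > 0"
  have c_nonneg: "\<forall>x\<in>A. 0 \<le> c x"
    using c_mono theta_in theta_min c_theta by (metis mono_onD)
  obtain M where tail: "\<forall>x\<in>A. M < x \<longrightarrow> p * (x - \<theta>) \<le> c x"
  proof (cases "bounded A")
    case True
    then obtain B where "\<forall>x\<in>A. \<bar>x\<bar> \<le> B"
      by (meson bounded_real)
    then show ?thesis
      using that[of B] by force
  next
    case False
    then show ?thesis
      using that superlinear_ge_affine[OF c_nonneg growth[OF False], of p "- p * \<theta>"]
      by (auto simp: algebra_simps)
  qed
  have lip: "(\<bar>\<theta>\<bar> + \<bar>M\<bar>)-lipschitz_on {0..p} (phi A c)"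
    using theta_in theta_min c_nonneg c_theta tail by (rule lipschitz_on_phi)
  have "\<sigma>\<^sup>2 / 2 * F A c \<gamma> p = b \<longleftrightarrow> F A c \<gamma> p = b / (\<sigma>\<^sup>2 / 2)" for \<gamma>
    using sigma_pos by (auto simp: field_simps)
  then show "\<exists>!\<gamma>. \<gamma> > phi_star A c p \<and> \<sigma>\<^sup>2 / 2 * F A c \<gamma> p = b"
    using ex1_integral_inverse_shift_eq[OF lip \<open>p > 0\<close>, of "b / (\<sigma>\<^sup>2 / 2)"] b_pos sigma_pos
    unfolding phi_star_def F_def by simp
qed

end
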